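(* Let $m,M,T$ be positive integers with $M<T$, let $\Pi_{\mathcal{A}}^M=\{p_a(\mathbf{z}_{1:M}):a\in\mathcal{A}\}$ be a family of probability densities on $\mathbb{R}^{mM}$ and $\mathcal{P}_{\mathcal{B}}^M=\{p_b(\mathbf{z}_t\mid\mathbf{z}_{t-1},\dots,\mathbf{z}_{t-M}):b\in\mathcal{B}\}$ a family of conditional densities on $\mathbb{R}^m$ given $\mathbb{R}^{mM}$. Assume the functions in the trajectory family $\mathcal{P}^{T,M}_{\mathcal{A},\mathcal{B}}=\{p_a(\mathbf{z}_{1:M})\prod_{t=M+1}^Tp_{b_t}(\mathbf{z}_t\mid\mathbf{z}_{t-1},\dots,\mathbf{z}_{t-M}) : a\in\mathcal{A},\ b_t\in\mathcal{B}\}$ are linearly independent under finite mixtures on $\mathbb{R}^{mT}$. Then the MSM family $\mathcal{M}^T(\Pi_{\mathcal{A}}^M,\mathcal{P}_{\mathcal{B}}^M)$ is identifiable up to permutations.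
   Context: A family of functions $\{g_\alpha:\alpha\in\mathcal{S}\}$ defined on a set $D$ is linearly independent under finite mixtures (on $D$) if for every finite $\mathcal{S}_0\subset\mathcal{S}$ the functions $\{g_\alpha:\alpha\in\mathcal{S}_0\}$ are linearly independent as functions on $D$ (the trajectory family is indexed by tuples $(a,b_{M+1},\dots,b_T)$). MSM family $\mathcal{M}^T(\Pi_{\mathcal{A}}^M,\mathcal{P}_{\mathcal{B}}^M)$: all functions $p(\mathbf{z}_{1:T})=\sum_{i=1}^{C}c_ip_{a^i}(\mathbf{z}_{1:M})\prod_{t=M+1}^Tp_{b^i_t}(\mathbf{z}_t\mid\mathbf{z}_{t-1},\dots,\mathbf{z}_{t-M})$, where $K_0,K<+\infty$, $\mathcal{A}_0\subset\mathcal{A}$, $\mathcal{B}_0\subset\mathcal{B}$, $|\mathcal{A}_0|=K_0$, $|\mathcal{B}_0|=K$, $C=K_0K^{T-M}$, $a^i\in\mathcal{A}_0$, $b^i_t\in\mathcal{B}_0$, the tuples $(a^i,b^i_{M+1},\dots,b^i_T)$ pairwise distinct, $c_i>0$, $\sum_ic_i=1$. Identifiable up to permutations: for any $p,\tilde p$ in the family (with data $(C,K_0,K,c_i,a^i,b^i_t)$ and $(\tilde C,\tilde K_0,\tilde K,\tilde c_i,\tilde a^i,\tilde b^i_t)$), $p=\tilde p$ on $\mathbb{R}^{mT}$ implies $C=\tilde C$, $K_0=\tilde K_0$, $K=\tilde K$, and for each $i$ there is $j$ with: (1) $c_i=\tilde c_j$; (2) $b^i_{t_1}=b^i_{t_2}$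 for $M<t_1\ne t_2\le T$ implies $\tilde b^j_{t_1}=\tilde b^j_{t_2}$; (3) $p_{a^i}=p_{\tilde a^j}$ on $\mathbb{R}^{mM}$; (4) $p_{b^i_t}=p_{\tilde b^j_t}$ on $\mathbb{R}^{m(M+1)}$ for all $M<t\le T$. *)

theory Defs
  imports "HOL-Analysis.Analysis"
begin

text \<open>Conventions: time is 0-indexed, so z_1..z_T of the paper are z 0 .. z (T-1).
  A point of R^(mk) is an extensional function from {..<k} to real^'m.\<close>

definition Rspace :: "nat \<Rightarrow> (nat \<Rightarrow> real^'m) set" where
  "Rspace k = (\<Pi>\<^sub>E i\<in>{..<k}. (UNIV :: (real^'m) set))"

definition Rmeasure :: "nat \<Rightarrow> (nat \<Rightarrow> real^'m) measure" where
  "Rmeasure k = (\<Pi>\<^sub>M i\<in>{..<k}. (lborel :: (real^'m) measure))"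

definition is_density :: "nat \<Rightarrow> ((nat \<Rightarrow> real^'m) \<Rightarrow> real) \<Rightarrow> bool" where
  "is_density k f \<longleftrightarrow> f \<in> borel_measurable (Rmeasure k)
     \<and> (\<forall>z\<in>space (Rmeasure k). 0 \<le> f z)
     \<and> (\<integral>\<^sup>+ z. ennreal (f z) \<partial>Rmeasure k) = 1"

definition is_cond_density :: "nat \<Rightarrow> (real^'m \<Rightarrow> (nat \<Rightarrow> real^'m) \<Rightarrow> real) \<Rightarrow> bool" where
  "is_cond_density M g \<longleftrightarrow> (\<forall>x\<in>Rspace M.
       (\<lambda>y. g y x) \<in> borel_measurable lborel
     \<and> (\<forall>y. 0 \<le> g y x)
     \<and> (\<integral>\<^sup>+ y. ennreal (g y x) \<partial>lborel) = 1)"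

definition hist :: "nat \<Rightarrow> nat \<Rightarrow> (nat \<Rightarrow> 'v) \<Rightarrow> (nat \<Rightarrow> 'v)" where
  "hist M t z = (\<lambda>j\<in>{..<M}. z (t - Suc j))"

definition traj :: "nat \<Rightarrow> nat \<Rightarrow> ('a \<Rightarrow> (nat \<Rightarrow> 'v) \<Rightarrow> real)
    \<Rightarrow> ('b \<Rightarrow> 'v \<Rightarrow> (nat \<Rightarrow> 'v) \<Rightarrow> real) \<Rightarrow> 'a \<Rightarrow> (nat \<Rightarrow> 'b) \<Rightarrow> (nat \<Rightarrow> 'v) \<Rightarrow> real" where
  "traj M T pa pb a bs z =
     pa a (restrict z {..<M}) * (\<Prod>t\<in>{M..<T}. pb (bs t) (z t) (hist M t z))"

definition lin_indep_finite_mixtures :: "'i set \<Rightarrow> ('i \<Rightarrow> 'x \<Rightarrow> real) \<Rightarrow> 'x set \<Rightarrow> bool" where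
  "lin_indep_finite_mixtures S g D \<longleftrightarrow>
     (\<forall>S0. S0 \<subseteq> S \<and> finite S0 \<longrightarrow>
        (\<forall>l. (\<forall>z\<in>D. (\<Sum>\<alpha>\<in>S0. l \<alpha> * g \<alpha> z) = 0) \<longrightarrow> (\<forall>\<alpha>\<in>S0. l \<alpha> = 0)))"

definition msm_params :: "'a set \<Rightarrow> 'b set \<Rightarrow> nat \<Rightarrow> nat \<Rightarrow> nat \<Rightarrow> nat \<Rightarrow> nat
    \<Rightarrow> 'a set \<Rightarrow> 'b set \<Rightarrow> (nat \<Rightarrow> real) \<Rightarrow> (nat \<Rightarrow> 'a) \<Rightarrow> (nat \<Rightarrow> nat \<Rightarrow> 'b) \<Rightarrow> bool" where
  "msm_params A B M T C K0 K A0 B0 c a b \<longleftrightarrow>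
     A0 \<subseteq> A \<and> B0 \<subseteq> B \<and> finite A0 \<and> finite B0 \<and> card A0 = K0 \<and> card B0 = K
     \<and> C = K0 * K ^ (T - M)
     \<and> (\<forall>i<C. a i \<in> A0 \<and> (\<forall>t\<in>{M..<T}. b i t \<in> B0))
     \<and> (\<forall>i<C. \<forall>j<C. i \<noteq> j \<longrightarrow> (a i \<noteq> a j \<or> (\<exists>t\<in>{M..<T}. b i t \<noteq> b j t)))
     \<and> (\<forall>i<C. 0 < c i) \<and> (\<Sum>i<C. c i) = 1"

definition msm_fun :: "nat \<Rightarrow> nat \<Rightarrow> ('a \<Rightarrow> (nat \<Rightarrow> 'v) \<Rightarrow> real)
    \<Rightarrow> ('b \<Rightarrow> 'v \<Rightarrow> (nat \<Rightarrow> 'v) \<Rightarrow> real) \<Rightarrow> nat \<Rightarrow> (nat \<Rightarrow> real) \<Rightarrow> (nat \<Rightarrow> 'a)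
    \<Rightarrow> (nat \<Rightarrow> nat \<Rightarrow> 'b) \<Rightarrow> (nat \<Rightarrow> 'v) \<Rightarrow> real" where
  "msm_fun M T pa pb C c a b z = (\<Sum>i<C. c i * traj M T pa pb (a i) (b i) z)"

end

theory Submission
  imports Defs
begin

text \<open>Subtracting one mixture representation from the other gives a finite linear combination
  of trajectory densities that vanishes on all of R^(mT). Linear independence makes every
  coefficient zero, so both representations have the same set of components
  A0 \<times> B0^(T-M), with equal weights, and the parameters can be read off from it.\<close>

lemma lin_indep_finite_mixtures_unique:
  assumes indep: "lin_indep_finite_mixtures I g D"
    and fin: "finite S" "finite S'" and sub: "S \<subseteq> I" "S' \<subseteq> I"
    and pos: "\<forall>\<alpha>\<in>S. 0 < w \<alpha>" "\<forall>\<alpha>\<in>S'. 0 < w' \<alpha>"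
    and eq: "\<forall>z\<in>D. (\<Sum>\<alpha>\<in>S. w \<alpha> * g \<alpha> z) = (\<Sum>\<alpha>\<in>S'. w' \<alpha> * g \<alpha> z)"
  shows "S = S' \<and> (\<forall>\<alpha>\<in>S. w \<alpha> = w' \<alpha>)"
proof -
  define l where "l \<alpha> = (if \<alpha> \<in> S then w \<alpha> else 0) - (if \<alpha> \<in> S' then w' \<alpha> else 0)" for \<alpha>
  have "(\<Sum>\<alpha>\<in>S \<union> S'. l \<alpha> * g \<alpha> z) = 0" if "z \<in> D" for z
  proof -
    have "(\<Sum>\<alpha>\<in>S \<union> S'. l \<alpha> * g \<alpha> z)
        = (\<Sum>\<alpha>\<in>S \<union> S'. if \<alpha> \<in> S then w \<alpha> * g \<alpha> z else 0)
          - (\<Sum>\<alpha>\<in>S \<union> S'. if \<alpha> \<in> S' then w' \<alpha> * g \<alpha> z else 0)"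
      unfolding l_def sum_subtractf[symmetric] by (intro sum.cong) (auto simp: algebra_simps)
    also have "\<dots> = (\<Sum>\<alpha>\<in>S. w \<alpha> * g \<alpha> z) - (\<Sum>\<alpha>\<in>S'. w' \<alpha> * g \<alpha> z)"
      using fin by (simp add: sum.If_cases Int_absorb1 Int_absorb2)
    finally show ?thesis using eq that by simp
  qed
  then have "\<forall>\<alpha>\<in>S \<union> S'. l \<alpha> = 0"
    using indep fin sub unfolding lin_indep_finite_mixtures_def by blast
  then show ?thesis using pos unfolding l_def by (fastforce split: if_splits)
qed

definition msm_component :: "nat \<Rightarrow> nat \<Rightarrow> (nat \<Rightarrow> 'a) \<Rightarrow> (nat \<Rightarrow> nat \<Rightarrow> 'b)
    \<Rightarrow> nat \<Rightarrow> 'a \<times> (nat \<Rightarrow> 'b)" where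
  "msm_component M T a b i = (a i, restrict (b i) {M..<T})"

lemma msm_component_eq_iff:
  "msm_component M T a b i = msm_component M T a' b' j
    \<longleftrightarrow> a i = a' j \<and> (\<forall>t\<in>{M..<T}. b i t = b' j t)"
  by (auto simp: msm_component_def restrict_def fun_eq_iff)

lemma msm_params_component_bij:
  assumes "msm_params A B M T C K0 K A0 B0 c a b"
  shows "bij_betw (msm_component M T a b) {..<C} (A0 \<times> (\<Pi>\<^sub>E t\<in>{M..<T}. B0))"
proof -
  note p = assms[unfolded msm_params_def]
  have inj: "inj_on (msm_component M T a b) {..<C}"
  proof (rule inj_onI)
    fix i j assume "i \<in> {..<C}" "j \<in> {..<C}" "msm_component M T a b i = msm_component M T a b j"
    moreover have "\<forall>i<C. \<forall>j<C. i \<noteq> j \<longrightarrow> a i \<noteq> a j \<or> (\<exists>t\<in>{M..<T}. b i t \<noteq> b j t)"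
      using p by blast
    ultimately show "i = j" unfolding msm_component_eq_iff by blast
  qed
  have sub: "msm_component M T a b ` {..<C} \<subseteq> A0 \<times> (\<Pi>\<^sub>E t\<in>{M..<T}. B0)"
    using p by (auto simp: msm_component_def)
  have "card (A0 \<times> (\<Pi>\<^sub>E t\<in>{M..<T}. B0)) = C"
    using p by (simp add: card_cartesian_product card_PiE)
  then have "card (msm_component M T a b ` {..<C}) = card (A0 \<times> (\<Pi>\<^sub>E t\<in>{M..<T}. B0))"
    using card_image[OF inj] by simp
  then have "msm_component M T a b ` {..<C} = A0 \<times> (\<Pi>\<^sub>E t\<in>{M..<T}. B0)"
    using p by (intro card_subset_eq[OF _ sub]) (simp_all add: finite_PiE)
  then show ?thesis using inj by (simp add: bij_betw_def)
qed

lemma msm_params_nonempty: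
  assumes "msm_params A B M T C K0 K A0 B0 c a b" and "M < T"
  shows "A0 \<noteq> {}" "B0 \<noteq> {}"
proof -
  have "C \<noteq> 0" using assms(1) unfolding msm_params_def by (metis lessThan_0 sum.empty zero_neq_one)
  then show "A0 \<noteq> {}" "B0 \<noteq> {}" using assms unfolding msm_params_def by auto
qed

lemma traj_msm_component:
  "(\<lambda>(a, bs). traj M T pa pb a bs) (msm_component M T a b i) = traj M T pa pb (a i) (b i)"
  unfolding traj_def msm_component_def by (intro ext) simp

lemma msm_fun_eq_sum_components:
  assumes "bij_betw (msm_component M T a b) {..<C} S"
  shows "msm_fun M T pa pb C c a b z
    = (\<Sum>\<alpha>\<in>S. c (inv_into {..<C} (msm_component M T a b) \<alpha>) * (\<lambda>(a, bs). traj M T pa pb a bs) \<alpha> z)"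
  unfolding msm_fun_def sum.reindex_bij_betw[OF assms, symmetric]
  using bij_betw_imp_inj_on[OF assms]
  by (intro sum.cong) (simp_all add: traj_msm_component)

lemma msm_fun_eq_imp_same_components:
  assumes indep: "lin_indep_finite_mixtures (A \<times> (\<Pi>\<^sub>E t\<in>{M..<T}. B))
           (\<lambda>(a, bs). traj M T pa pb a bs) D"
    and P: "msm_params A B M T C K0 K A0 B0 c a b"
    and P': "msm_params A B M T C' K0' K' A0' B0' c' a' b'"
    and eq: "\<forall>z\<in>D. msm_fun M T pa pb C c a b z = msm_fun M T pa pb C' c' a' b' z"
  shows "A0 \<times> (\<Pi>\<^sub>E t\<in>{M..<T}. B0) = A0' \<times> (\<Pi>\<^sub>E t\<in>{M..<T}. B0')"
    and "\<forall>i<C. \<exists>j<C'. c i = c' j \<and> msm_component M T a b i = msm_component M T a' b' j"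
proof -
  let ?\<tau> = "msm_component M T a b" and ?\<tau>' = "msm_component M T a' b'"
  let ?S = "A0 \<times> (\<Pi>\<^sub>E t\<in>{M..<T}. B0)" and ?S' = "A0' \<times> (\<Pi>\<^sub>E t\<in>{M..<T}. B0')"
  note bij = msm_params_component_bij[OF P] and bij' = msm_params_component_bij[OF P']
  have "0 < c (inv_into {..<C} ?\<tau> \<alpha>)" if "\<alpha> \<in> ?S" for \<alpha>
    using P bij_betw_apply[OF bij_betw_inv_into[OF bij] that] unfolding msm_params_def by auto
  moreover have "0 < c' (inv_into {..<C'} ?\<tau>' \<alpha>)" if "\<alpha> \<in> ?S'" for \<alpha>
    using P' bij_betw_apply[OF bij_betw_inv_into[OF bij'] that] unfolding msm_params_def by auto
  moreover have "?S \<subseteq> A \<times> (\<Pi>\<^sub>E t\<in>{M..<T}. B)" "?S' \<subseteq> A \<times> (\<Pi>\<^sub>E t\<in>{M..<T}. B)"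
    using P P' unfolding msm_params_def by auto
  moreover have "finite ?S" "finite ?S'"
    using P P' unfolding msm_params_def by (simp_all add: finite_PiE)
  ultimately have same: "?S = ?S' \<and> (\<forall>\<alpha>\<in>?S. c (inv_into {..<C} ?\<tau> \<alpha>) = c' (inv_into {..<C'} ?\<tau>' \<alpha>))"
    using eq by (intro lin_indep_finite_mixtures_unique[OF indep])
      (simp_all add: msm_fun_eq_sum_components[OF bij] msm_fun_eq_sum_components[OF bij'])
  then show "?S = ?S'" ..
  show "\<forall>i<C. \<exists>j<C'. c i = c' j \<and> ?\<tau> i = ?\<tau>' j"
  proof (intro allI impI)
    fix i assume i: "i < C"
    define j where "j = inv_into {..<C'} ?\<tau>' (?\<tau> i)"
    have mem: "?\<tau> i \<in> ?S" using bij_betw_apply[OF bij] i by simp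
    then have "?\<tau> i \<in> ?S'" using same by simp
    moreover have "c (inv_into {..<C} ?\<tau> (?\<tau> i)) = c' j"
      unfolding j_def by (rule bspec[OF conjunct2[OF same] mem])
    ultimately have "j < C'" "?\<tau>' j = ?\<tau> i" and "c i = c' j"
      unfolding j_def using bij_betw_apply[OF bij_betw_inv_into[OF bij']]
        bij_betw_inv_into_right[OF bij'] inv_into_f_f[OF bij_betw_imp_inj_on[OF bij]] i
      by auto
    then show "\<exists>j<C'. c i = c' j \<and> ?\<tau> i = ?\<tau>' j" by auto
  qed
qed

theorem theorem3:
  fixes A :: "'a set" and B :: "'b set"
    and pa :: "'a \<Rightarrow> (nat \<Rightarrow> real^'m) \<Rightarrow> real"
    and pb :: "'b \<Rightarrow> real^'m \<Rightarrow> (nat \<Rightarrow> real^'m) \<Rightarrow> real"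
    and M T :: nat
  assumes "1 \<le> M" and "M < T"
    and "\<forall>a\<in>A. is_density M (pa a)"
    and "\<forall>b\<in>B. is_cond_density M (pb b)"
    and "lin_indep_finite_mixtures (A \<times> (\<Pi>\<^sub>E t\<in>{M..<T}. B))
           (\<lambda>(a, bs). traj M T pa pb a bs) (Rspace T)"
    and "msm_params A B M T C K0 K A0 B0 c a b"
    and "msm_params A B M T C' K0' K' A0' B0' c' a' b'"
    and "\<forall>z\<in>Rspace T. msm_fun M T pa pb C c a b z = msm_fun M T pa pb C' c' a' b' z"
  shows "C = C' \<and> K0 = K0' \<and> K = K' \<and>
    (\<forall>i<C. \<exists>j<C'.
        c i = c' j
      \<and> (\<forall>t1\<in>{M..<T}. \<forall>t2\<in>{M..<T}. t1 \<noteq> t2 \<longrightarrow> b i t1 = b i t2 \<longrightarrow> b' j t1 = b' j t2)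
      \<and> (\<forall>x\<in>Rspace M. pa (a i) x = pa (a' j) x)
      \<and> (\<forall>t\<in>{M..<T}. \<forall>y. \<forall>x\<in>Rspace M. pb (b i t) y x = pb (b' j t) y x))"
proof -
  note components = msm_fun_eq_imp_same_components[OF assms(5-8)]
  have "{M..<T} \<noteq> {}" using assms(2) by simp
  then have "A0 = A0' \<and> B0 = B0'"
    using components(1) msm_params_nonempty[OF assms(6,2)]
    by (auto simp: times_eq_iff PiE_eq_iff PiE_eq_empty_iff)
  then have "C = C' \<and> K0 = K0' \<and> K = K'"
    using assms(6,7) unfolding msm_params_def by auto
  moreover have "\<forall>i<C. \<exists>j<C'. c i = c' j \<and> a i = a' j \<and> (\<forall>t\<in>{M..<T}. b i t = b' j t)"
    using components(2) by (simp add: msm_component_eq_iff)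
  ultimately show ?thesis by (metis (no_types, lifting))
qed

end
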